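(* Let $\mathcal{U}$ be a Banach space, $\mathcal{W},\mathcal{Y}$ reflexive Banach spaces, $\mathcal{G}$ a Hilbert space, $A\in L(\mathcal{Y},\mathcal{W}^* )$ continuously invertible, $B\in L(\mathcal{U},\mathcal{W}^* )$, $C\in L(\mathcal{Y},\mathcal{G})$, and $K:=CA^{-1}B\in L(\mathcal{U},\mathcal{G})$. Let $\{\mathcal{R}_\alpha\}_{\alpha>0}$ be a family of proper, convex, lower semicontinuous functionals $\mathcal{R}_\alpha:\mathcal{U}\to\mathbb{R}\cup\{+\infty\}$, and set $J_\alpha(u,y):=\frac12\|Cy-g^\delta\|_\mathcal{G}^2+\mathcal{R}_\alpha(u)$. Let $\mathcal{U}_h\subset\mathcal{U}$, $\mathcal{Y}_h\subset\mathcal{Y}$, $\mathcal{W}_h\subset\mathcal{W}$ be finite-dimensional subspaces. Let $g^\dagger\in\mathcal{G}$ and, for $\delta>0$, let $g^\delta\in\mathcal{G}$ satisfy $\|g^\dagger-g^\delta\|_\mathcal{G}\le\delta$. For $\alpha>0$, let $(u_\alpha^\delta,y_\alpha^\delta)$ be a minimizer of $J_\alpha(u,y)$ over $u\in\mathcal{U}$, $y\in\mathcal{Y}$ subject to $Ay=Bu$ in $\mathcal{W}^*$, and let $(u_{\alpha,h}^\delta,y_{\alpha,h}^\delta)$ be a minimizer of $J_\alpha(u,y)$ over $u\in\mathcal{U}_h$, $y\in\mathcal{Y}_h$ subject to $\langle Ay-Bu,w_h\rangle_{\mathcal{W}^*,\mathcal{W}}=0$ for all $w_h\in\mathcal{W}_h$.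 Let $c_1,c_2,\overline{\tau},\underline{\tau}>0$ be constants independent of $\delta$ with $\overline{\tau}>\underline{\tau}\ge\max\{\sqrt{1+2c_2},\,1+c_1\}$, and let $\alpha(\delta)>0$ be chosen such that $$\underline{\tau}\delta\le\|Cy_{\alpha(\delta),h}^\delta-g^\delta\|_\mathcal{G}\le\overline{\tau}\delta,$$ $$\Big|\|Cy_{\alpha(\delta),h}^\delta-g^\delta\|_\mathcal{G}-\|Cy_{\alpha(\delta)}^\delta-g^\delta\|_\mathcal{G}\Big|\le c_1\delta,$$ $$J_{\alpha(\delta)}(u_{\alpha(\delta),h}^\delta,y_{\alpha(\delta),h}^\delta)-J_{\alpha(\delta)}(u_{\alpha(\delta)}^\delta,y_{\alpha(\delta)}^\delta)\le c_2\delta^2.$$ Then for any solution $u^\dagger\in\mathcal{U}$ of $Ku=g^\dagger$, $$\mathcal{R}_{\alpha(\delta)}(u_{\alpha(\delta)}^\delta)\le\mathcal{R}_{\alpha(\delta)}(u^\dagger)\quad\text{and}\quad\mathcal{R}_{\alpha(\delta)}(u_{\alpha(\delta),h}^\delta)\le\mathcal{R}_{\alpha(\delta)}(u^\dagger)\quad\text{for all }\delta>0,$$ and moreover $$\|Cy_{\alpha(\delta),h}^\delta-g^\delta\|_\mathcal{G}\le\overline{\tau}\delta\to0\quad\text{and}\quad\|Cy_{\alpha(\delta)}^\delta-g^\delta\|_\mathcal{G}\le(\overline{\tau}+c_1)\delta\to0\quad(\delta\to0).$$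
   Context: Minimizers of the continuous and discrete problems are assumed to exist for all $\alpha,\delta$ considered. *)

theory Defs
  imports "HOL-Analysis.Analysis"
begin

definition reflexive_space :: "'a::real_normed_vector itself \<Rightarrow> bool" where
  "reflexive_space _ \<longleftrightarrow>
     (\<forall>\<phi> :: ('a \<Rightarrow>\<^sub>L real) \<Rightarrow>\<^sub>L real. \<exists>x::'a. \<forall>f. blinfun_apply \<phi> f = blinfun_apply f x)"

definition proper_fun :: "('a \<Rightarrow> ereal) \<Rightarrow> bool" where
  "proper_fun R \<longleftrightarrow> (\<forall>u. R u \<noteq> -\<infinity>) \<and> (\<exists>u. R u < \<infinity>)"

definition convex_fun :: "('a::real_vector \<Rightarrow> ereal) \<Rightarrow> bool" where
  "convex_fun R \<longleftrightarrow> (\<forall>x y t. 0 < t \<and> t < 1 \<longrightarrow>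
      R (t *\<^sub>R x + (1 - t) *\<^sub>R y) \<le> ereal t * R x + ereal (1 - t) * R y)"

definition lsc_fun :: "('a::topological_space \<Rightarrow> ereal) \<Rightarrow> bool" where
  "lsc_fun R \<longleftrightarrow> (\<forall>c. closed {u. R u \<le> c})"

definition fin_dim_subspace :: "'a::real_vector set \<Rightarrow> bool" where
  "fin_dim_subspace S \<longleftrightarrow> subspace S \<and> (\<exists>B. finite B \<and> span B = S)"

definition Jfun :: "('u \<Rightarrow> ereal) \<Rightarrow> ('y::real_normed_vector \<Rightarrow>\<^sub>L 'g::real_normed_vector)
     \<Rightarrow> 'g \<Rightarrow> 'u \<Rightarrow> 'y \<Rightarrow> ereal" where
  "Jfun R C g u y = ereal ((1/2) * (norm (C y - g))\<^sup>2) + R u"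

end

theory Submission
  imports Defs
begin

text \<open>The exact solution \<open>u\<^sup>\<dagger>\<close> together with \<open>y\<^sup>\<dagger> = A\<^sup>-\<^sup>1 B u\<^sup>\<dagger>\<close> is admissible
  for the continuous problem and has residual \<open>\<parallel>g\<^sup>\<dagger> - g\<^sup>\<delta>\<parallel> \<le> \<delta>\<close>. Comparing
  \<open>J\<^sub>\<alpha>\<close> at the minimizers with \<open>J\<^sub>\<alpha>(u\<^sup>\<dagger>, y\<^sup>\<dagger>)\<close>, the data terms can be cancelled
  because the discrepancy principle makes the residuals of the minimizers large:
  the continuous residual is at least \<open>(\<tau> - c\<^sub>1)\<delta> \<ge> \<delta>\<close>, and the discrete residual is at
  least \<open>\<tau>\<delta> \<ge> \<surd>(1 + 2c\<^sub>2) \<delta>\<close>, which absorbs the gap \<open>c\<^sub>2\<delta>\<^sup>2\<close> between the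
  discrete and the continuous minimum. Reflexivity, properness, convexity and lower semicontinuity
  only serve to guarantee that the minimizers exist, which is assumed here.\<close>

lemma ereal_le_add_if_minus_le:
  fixes x y :: ereal
  assumes "x - y \<le> ereal c"
  shows "x \<le> ereal c + y"
  using assms by (cases x; cases y) auto

lemma ereal_add_le_cancel_real:
  fixes x y :: ereal
  assumes "ereal a + x \<le> ereal b + y" and "b \<le> a"
  shows "x \<le> y"
  using assms by (cases x; cases y) auto

lemma R_le_if_Jfun_le:
  assumes "Jfun R C g u y \<le> ereal c + Jfun R C g u' y'"
    and "(1/2) * (norm (C y' - g))\<^sup>2 + c \<le> (1/2) * (norm (C y - g))\<^sup>2"
  shows "R u \<le> R u'"
proof (rule ereal_add_le_cancel_real)
  show "ereal ((1/2) * (norm (C y - g))\<^sup>2) + R u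
        \<le> ereal ((1/2) * (norm (C y' - g))\<^sup>2 + c) + R u'"
    using assms(1) by (simp add: Jfun_def ac_simps flip: plus_ereal.simps(1))
qed (use assms(2) in auto)

lemma half_sq_add_le_half_sq:
  fixes \<delta> c r :: real
  assumes "0 \<le> \<delta>" and "0 \<le> c" and "sqrt (1 + 2 * c) * \<delta> \<le> r"
  shows "(1/2) * \<delta>\<^sup>2 + c * \<delta>\<^sup>2 \<le> (1/2) * r\<^sup>2"
proof -
  have "(1 + 2 * c) * \<delta>\<^sup>2 = (sqrt (1 + 2 * c) * \<delta>)\<^sup>2"
    using assms(2) by (simp add: power_mult_distrib)
  also have "\<dots> \<le> r\<^sup>2"
    using assms by (intro power_mono) auto
  finally show ?thesis by (simp add: algebra_simps)
qed

lemma R_le_exact_under_discrepancy: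
  assumes J_cont: "Jfun R C g uc yc \<le> Jfun R C g u y"
    and J_gap: "Jfun R C g uh yh - Jfun R C g uc yc \<le> ereal (c2 * \<delta>\<^sup>2)"
    and res_exact: "norm (C y - g) \<le> \<delta>"
    and res_disc: "tau * \<delta> \<le> norm (C yh - g)"
    and res_close: "\<bar>norm (C yh - g) - norm (C yc - g)\<bar> \<le> c1 * \<delta>"
    and tau: "max (sqrt (1 + 2 * c2)) (1 + c1) \<le> tau"
    and \<delta>: "0 \<le> \<delta>" and c2: "0 \<le> c2"
  shows "R uc \<le> R u \<and> R uh \<le> R u"
proof -
  have J_cont': "Jfun R C g uc yc \<le> ereal 0 + Jfun R C g u y"
    using J_cont by simp
  have J_disc: "Jfun R C g uh yh \<le> ereal (c2 * \<delta>\<^sup>2) + Jfun R C g u y"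
    using ereal_le_add_if_minus_le[OF J_gap] add_left_mono[OF J_cont] by (simp add: order_trans)
  have "(1 + c1) * \<delta> \<le> tau * \<delta>"
    using tau \<delta> by (intro mult_right_mono) auto
  then have res_cont: "\<delta> \<le> norm (C yc - g)"
    using res_disc res_close by (simp add: algebra_simps abs_le_iff)
  have "sqrt (1 + 2 * c2) * \<delta> \<le> norm (C yh - g)"
    using res_disc tau \<delta> by (meson max.boundedE mult_right_mono order_trans)
  then have "(1/2) * \<delta>\<^sup>2 + c2 * \<delta>\<^sup>2 \<le> (1/2) * (norm (C yh - g))\<^sup>2"
    using \<delta> c2 by (intro half_sq_add_le_half_sq)
  moreover have "(norm (C y - g))\<^sup>2 \<le> \<delta>\<^sup>2" "\<delta>\<^sup>2 \<le> (norm (C yc - g))\<^sup>2"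
    using res_exact res_cont \<delta> by (auto intro: power_mono)
  ultimately show ?thesis
    by (intro conjI R_le_if_Jfun_le[OF J_cont'] R_le_if_Jfun_le[OF J_disc]; linarith)
qed

lemma tendsto_at_right_0_if_le_linear:
  fixes f :: "real \<Rightarrow> real"
  assumes "\<And>\<delta>. \<delta> > 0 \<Longrightarrow> 0 \<le> f \<delta> \<and> f \<delta> \<le> c * \<delta>"
  shows "(f \<longlongrightarrow> 0) (at_right 0)"
proof (rule tendsto_sandwich[OF _ _ tendsto_const])
  show "((\<lambda>\<delta>. c * \<delta>) \<longlongrightarrow> 0) (at_right 0)"
    by (auto intro!: tendsto_eq_intros simp: tendsto_ident_at)
qed (use assms in \<open>auto simp: eventually_at_right_field intro: exI[of _ 1]\<close>)

theorem proposition2p1: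
  fixes A :: "'y::banach \<Rightarrow>\<^sub>L ('w::banach \<Rightarrow>\<^sub>L real)"
    and Ainv :: "('w \<Rightarrow>\<^sub>L real) \<Rightarrow>\<^sub>L 'y"
    and B :: "'u::banach \<Rightarrow>\<^sub>L ('w \<Rightarrow>\<^sub>L real)"
    and C :: "'y \<Rightarrow>\<^sub>L 'g::{real_inner, complete_space}"
    and R :: "real \<Rightarrow> 'u \<Rightarrow> ereal"
    and Uh :: "'u set" and Yh :: "'y set" and Wh :: "'w set"
    and gdag :: 'g and gd :: "real \<Rightarrow> 'g"
    and ud :: "real \<Rightarrow> real \<Rightarrow> 'u" and yd :: "real \<Rightarrow> real \<Rightarrow> 'y"
    and udh :: "real \<Rightarrow> real \<Rightarrow> 'u" and ydh :: "real \<Rightarrow> real \<Rightarrow> 'y"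
    and c1 c2 tau_up tau_lo :: real
    and alpha :: "real \<Rightarrow> real"
  assumes reflW: "reflexive_space TYPE('w)"
    and reflY: "reflexive_space TYPE('y)"
    and Ainv_left: "Ainv o\<^sub>L A = id_blinfun"
    and Ainv_right: "A o\<^sub>L Ainv = id_blinfun"
    and R_proper: "\<And>a. a > 0 \<Longrightarrow> proper_fun (R a)"
    and R_convex: "\<And>a. a > 0 \<Longrightarrow> convex_fun (R a)"
    and R_lsc: "\<And>a. a > 0 \<Longrightarrow> lsc_fun (R a)"
    and Uh_fd: "fin_dim_subspace Uh"
    and Yh_fd: "fin_dim_subspace Yh"
    and Wh_fd: "fin_dim_subspace Wh"
    and noise: "\<And>\<delta>. \<delta> > 0 \<Longrightarrow> norm (gdag - gd \<delta>) \<le> \<delta>"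
    and cont_feas: "\<And>\<delta> a. \<delta> > 0 \<Longrightarrow> a > 0 \<Longrightarrow> A (yd \<delta> a) = B (ud \<delta> a)"
    and cont_min: "\<And>\<delta> a u y. \<delta> > 0 \<Longrightarrow> a > 0 \<Longrightarrow> A y = B u \<Longrightarrow>
         Jfun (R a) C (gd \<delta>) (ud \<delta> a) (yd \<delta> a) \<le> Jfun (R a) C (gd \<delta>) u y"
    and disc_feas: "\<And>\<delta> a. \<delta> > 0 \<Longrightarrow> a > 0 \<Longrightarrow>
         udh \<delta> a \<in> Uh \<and> ydh \<delta> a \<in> Yh \<and>
         (\<forall>w\<in>Wh. (A (ydh \<delta> a) - B (udh \<delta> a)) w = 0)"
    and disc_min: "\<And>\<delta> a u y. \<delta> > 0 \<Longrightarrow> a > 0 \<Longrightarrow> u \<in> Uh \<Longrightarrow> y \<in> Yh \<Longrightarrow>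
         (\<forall>w\<in>Wh. (A y - B u) w = 0) \<Longrightarrow>
         Jfun (R a) C (gd \<delta>) (udh \<delta> a) (ydh \<delta> a) \<le> Jfun (R a) C (gd \<delta>) u y"
    and c1_pos: "c1 > 0" and c2_pos: "c2 > 0"
    and tau_lo_pos: "tau_lo > 0" and tau_up_pos: "tau_up > 0"
    and tau_order: "tau_up > tau_lo"
    and tau_lo_bound: "tau_lo \<ge> max (sqrt (1 + 2 * c2)) (1 + c1)"
    and alpha_pos: "\<And>\<delta>. \<delta> > 0 \<Longrightarrow> alpha \<delta> > 0"
    and discrep: "\<And>\<delta>. \<delta> > 0 \<Longrightarrow>
         tau_lo * \<delta> \<le> norm (C (ydh \<delta> (alpha \<delta>)) - gd \<delta>) \<and>
         norm (C (ydh \<delta> (alpha \<delta>)) - gd \<delta>) \<le> tau_up * \<delta>"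
    and resid_close: "\<And>\<delta>. \<delta> > 0 \<Longrightarrow>
         \<bar>norm (C (ydh \<delta> (alpha \<delta>)) - gd \<delta>) - norm (C (yd \<delta> (alpha \<delta>)) - gd \<delta>)\<bar> \<le> c1 * \<delta>"
    and J_close: "\<And>\<delta>. \<delta> > 0 \<Longrightarrow>
         Jfun (R (alpha \<delta>)) C (gd \<delta>) (udh \<delta> (alpha \<delta>)) (ydh \<delta> (alpha \<delta>))
         - Jfun (R (alpha \<delta>)) C (gd \<delta>) (ud \<delta> (alpha \<delta>)) (yd \<delta> (alpha \<delta>))
         \<le> ereal (c2 * \<delta>\<^sup>2)"
  shows "(\<forall>udag. (C o\<^sub>L Ainv o\<^sub>L B) udag = gdag \<longrightarrow>
            (\<forall>\<delta>>0. R (alpha \<delta>) (ud \<delta> (alpha \<delta>)) \<le> R (alpha \<delta>) udag \<and>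
                    R (alpha \<delta>) (udh \<delta> (alpha \<delta>)) \<le> R (alpha \<delta>) udag)) \<and>
         (\<forall>\<delta>>0. norm (C (ydh \<delta> (alpha \<delta>)) - gd \<delta>) \<le> tau_up * \<delta> \<and>
              norm (C (yd \<delta> (alpha \<delta>)) - gd \<delta>) \<le> (tau_up + c1) * \<delta>) \<and>
         ((\<lambda>\<delta>. norm (C (ydh \<delta> (alpha \<delta>)) - gd \<delta>)) \<longlongrightarrow> 0) (at_right 0) \<and>
         ((\<lambda>\<delta>. norm (C (yd \<delta> (alpha \<delta>)) - gd \<delta>)) \<longlongrightarrow> 0) (at_right 0)"
proof -
  have R_le_exact: "R (alpha \<delta>) (ud \<delta> (alpha \<delta>)) \<le> R (alpha \<delta>) udag \<and>
                    R (alpha \<delta>) (udh \<delta> (alpha \<delta>)) \<le> R (alpha \<delta>) udag"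
    if exact: "(C o\<^sub>L Ainv o\<^sub>L B) udag = gdag" and \<delta>: "\<delta> > 0" for udag \<delta>
  proof -
    define ydag where "ydag = Ainv (B udag)"
    have "A ydag = B udag"
      using arg_cong[OF Ainv_right, of "\<lambda>f. f (B udag)"] by (simp add: ydag_def)
    moreover have "norm (C ydag - gd \<delta>) \<le> \<delta>"
      using noise[OF \<delta>] exact by (simp add: ydag_def)
    ultimately show ?thesis
      using R_le_exact_under_discrepancy[OF cont_min[OF \<delta> alpha_pos[OF \<delta>]] J_close[OF \<delta>]]
        discrep[OF \<delta>] resid_close[OF \<delta>] tau_lo_bound \<delta> c2_pos
      by auto
  qed
  have residuals: "norm (C (ydh \<delta> (alpha \<delta>)) - gd \<delta>) \<le> tau_up * \<delta> \<and>
                   norm (C (yd \<delta> (alpha \<delta>)) - gd \<delta>) \<le> (tau_up + c1) * \<delta>" if "\<delta> > 0" for \<delta>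
    using discrep[OF that] resid_close[OF that] by (simp add: algebra_simps abs_le_iff)
  show ?thesis
    using R_le_exact residuals
    by (auto intro!: tendsto_at_right_0_if_le_linear)
qed

end
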